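(* Let $a$ be a positive integer. If there exists a Hadamard matrix of order $4a$, then there exists a $(4a-2)$--$\mathrm{MOFR}(4,2a;2)$.
   Context: A Hadamard matrix of order $N$ is an $N\times N$ matrix $H$ with entries in $\{1,-1\}$ satisfying $HH^T=NI_N$. A frequency rectangle of type $\mathrm{FR}(m,n;q)$ is an $m\times n$ array on a symbol set of size $q$ in which each symbol appears exactly $n/q$ times in each row and $m/q$ times in each column. Two frequency rectangles of the same type are orthogonal if upon superimposition each ordered pair of symbols appears the same number of times. A $k$--$\mathrm{MOFR}(m,n;q)$ is a set of $k$ pairwise orthogonal frequency rectangles of type $\mathrm{FR}(m,n;q)$. *)

theory Defs
  imports Main
begin

definition hadamard :: "nat \<Rightarrow> (nat \<Rightarrow> nat \<Rightarrow> int) \<Rightarrow> bool" where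
  "hadamard N H \<longleftrightarrow>
     (\<forall>i<N. \<forall>j<N. H i j = 1 \<or> H i j = -1) \<and>
     (\<forall>i<N. \<forall>k<N. (\<Sum>j<N. H i j * H k j) = (if i = k then int N else 0))"

definition freq_rect :: "nat \<Rightarrow> nat \<Rightarrow> nat \<Rightarrow> (nat \<Rightarrow> nat \<Rightarrow> nat) \<Rightarrow> bool" where
  "freq_rect m n q F \<longleftrightarrow>
     (\<forall>i<m. \<forall>j<n. F i j < q) \<and>
     (\<forall>i<m. \<forall>s<q. q * card {j. j < n \<and> F i j = s} = n) \<and>
     (\<forall>j<n. \<forall>s<q. q * card {i. i < m \<and> F i j = s} = m)"

definition orth_fr :: "nat \<Rightarrow> nat \<Rightarrow> nat \<Rightarrow> (nat \<Rightarrow> nat \<Rightarrow> nat) \<Rightarrow> (nat \<Rightarrow> nat \<Rightarrow> nat) \<Rightarrow> bool" where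
  "orth_fr m n q F G \<longleftrightarrow>
     (\<exists>c. \<forall>s<q. \<forall>t<q. card {(i, j). i < m \<and> j < n \<and> F i j = s \<and> G i j = t} = c)"

definition MOFR :: "nat \<Rightarrow> nat \<Rightarrow> nat \<Rightarrow> nat \<Rightarrow> (nat \<Rightarrow> nat \<Rightarrow> nat \<Rightarrow> nat) \<Rightarrow> bool" where
  "MOFR k m n q F \<longleftrightarrow>
     (\<forall>r<k. freq_rect m n q (F r)) \<and>
     (\<forall>r<k. \<forall>r'<k. r \<noteq> r' \<longrightarrow> orth_fr m n q (F r) (F r'))"

end

theory Submission
  imports Defs
begin

text \<open>Multiplying columns by signs, we may assume the first row of the Hadamard matrix is
  all ones. Row 1 then splits the \<open>4a\<close> columns into halves \<open>P\<close> and \<open>Q\<close> of size \<open>2a\<close>, and each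
  of the remaining \<open>4a - 2\<close> rows \<open>v\<close> yields the \<open>4 \<times> 2a\<close> array with rows \<open>v|P\<close>, \<open>v|Q\<close>,
  \<open>-v|P\<close>, \<open>-v|Q\<close>. By orthogonality to the first row and to each other, any two further rows
  show each of the four sign patterns in exactly \<open>a\<close> columns. Hence each row of the array is
  balanced; each column reads \<open>x, y, -x, -y\<close>; and for two arrays the pair \<open>(\<sigma>, \<tau>)\<close> occurs
  wherever the rows \<open>(v, w)\<close> read \<open>(\<sigma>, \<tau>)\<close> or \<open>(-\<sigma>, -\<tau>)\<close>, that is \<open>a + a\<close> times.\<close>

lemma card_sign_pair:
  fixes f g :: "'a \<Rightarrow> int"
  assumes "finite A" and "\<forall>k\<in>A. f k = 1 \<or> f k = -1" and "\<forall>k\<in>A. g k = 1 \<or> g k = -1"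
    and "s = 1 \<or> s = -1" and "t = 1 \<or> t = -1"
  shows "4 * int (card {k\<in>A. f k = s \<and> g k = t}) =
    int (card A) + s * sum f A + t * sum g A + s * t * (\<Sum>k\<in>A. f k * g k)"
proof -
  \<comment> \<open>\<open>(1 + s f k) (1 + t g k)\<close> is 4 if \<open>(f k, g k) = (s, t)\<close> and 0 otherwise.\<close>
  have "4 * int (card {k\<in>A. f k = s \<and> g k = t}) = (\<Sum>k\<in>A. if f k = s \<and> g k = t then 4 else 0)"
    using assms(1) by (simp add: sum.If_cases Int_def)
  also have "\<dots> = (\<Sum>k\<in>A. (1 + s * f k) * (1 + t * g k))"
    using assms(2-5) by (intro sum.cong) (auto simp: algebra_simps)
  also have "\<dots> = (\<Sum>k\<in>A. 1 + s * f k + t * g k + s * t * (f k * g k))"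
    by (simp add: algebra_simps)
  also have "\<dots> = int (card A) + s * sum f A + t * sum g A + s * t * (\<Sum>k\<in>A. f k * g k)"
    by (simp add: sum.distrib sum_distrib_left)
  finally show ?thesis .
qed

lemma card_sign:
  fixes f :: "'a \<Rightarrow> int"
  assumes "finite A" and "\<forall>k\<in>A. f k = 1 \<or> f k = -1" and "s = 1 \<or> s = -1"
  shows "2 * int (card {k\<in>A. f k = s}) = int (card A) + s * sum f A"
  using card_sign_pair[OF assms(1,2), of "\<lambda>_. 1" s 1] assms(3) by auto

definition normalize_columns :: "(nat \<Rightarrow> nat \<Rightarrow> int) \<Rightarrow> nat \<Rightarrow> nat \<Rightarrow> int" where
  "normalize_columns H i j = H i j * H 0 j"

lemma hadamard_entry:
  "hadamard N H \<Longrightarrow> i < N \<Longrightarrow> j < N \<Longrightarrow> H i j = 1 \<or> H i j = -1"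
  unfolding hadamard_def by blast

lemma hadamard_normalize_columns:
  assumes "hadamard N H"
  shows "hadamard N (normalize_columns H)"
  unfolding hadamard_def
proof (intro conjI allI impI)
  fix i j assume "i < N" "j < N"
  then show "normalize_columns H i j = 1 \<or> normalize_columns H i j = -1"
    using hadamard_entry[OF assms, of i j] hadamard_entry[OF assms, of 0 j]
    by (auto simp: normalize_columns_def)
next
  fix i k assume "i < N" "k < N"
  have "(\<Sum>j<N. normalize_columns H i j * normalize_columns H k j) = (\<Sum>j<N. H i j * H k j)"
  proof (intro sum.cong)
    fix j assume "j \<in> {..<N}"
    then have "H 0 j * H 0 j = 1" using hadamard_entry[OF assms, of 0 j] by auto
    then show "normalize_columns H i j * normalize_columns H k j = H i j * H k j"
      unfolding normalize_columns_def by (metis mult.assoc mult.commute mult.right_neutral)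
  qed simp
  then show "(\<Sum>j<N. normalize_columns H i j * normalize_columns H k j) = (if i = k then int N else 0)"
    using assms \<open>i < N\<close> \<open>k < N\<close> unfolding hadamard_def by simp
qed

lemma normalize_columns_first_row:
  "hadamard N H \<Longrightarrow> j < N \<Longrightarrow> normalize_columns H 0 j = 1"
  using hadamard_entry[of N H 0 j] by (auto simp: normalize_columns_def)

lemma normalized_hadamard_row_sum:
  assumes "hadamard N H" and "\<forall>j<N. H 0 j = 1" and "0 < r" and "r < N"
  shows "(\<Sum>j<N. H r j) = 0"
proof -
  have "(\<Sum>j<N. H r j) = (\<Sum>j<N. H r j * H 0 j)"
    using assms(2) by simp
  also have "\<dots> = 0"
    using assms(1,3,4) unfolding hadamard_def by auto
  finally show ?thesis .
qed

lemma normalized_hadamard_card_row: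
  assumes "hadamard N H" and "\<forall>j<N. H 0 j = 1" and "0 < r" and "r < N" and "s = 1 \<or> s = -1"
  shows "2 * card {j\<in>{..<N}. H r j = s} = N"
  using card_sign[of "{..<N}" "H r" s] hadamard_entry[OF assms(1)] assms(4,5)
    normalized_hadamard_row_sum[OF assms(1-4)] by simp

lemma normalized_hadamard_card_rows:
  assumes "hadamard N H" and "\<forall>j<N. H 0 j = 1"
    and "0 < r" and "r < N" and "0 < r'" and "r' < N" and "r \<noteq> r'"
    and "s = 1 \<or> s = -1" and "t = 1 \<or> t = -1"
  shows "4 * card {j\<in>{..<N}. H r j = s \<and> H r' j = t} = N"
proof -
  have "(\<Sum>j<N. H r j * H r' j) = 0"
    using assms(1,4,6,7) unfolding hadamard_def by simp
  then show ?thesis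
    using card_sign_pair[of "{..<N}" "H r" "H r'" s t] hadamard_entry[OF assms(1)] assms(4,6,8,9)
      normalized_hadamard_row_sum[OF assms(1-4)] normalized_hadamard_row_sum[OF assms(1,2,5,6)]
    by simp
qed

definition sign_symbol :: "int \<Rightarrow> nat" where
  "sign_symbol x = (if x = 1 then 0 else 1)"

lemma sign_symbol_eq_iff:
  "x = 1 \<or> x = -1 \<Longrightarrow> s < 2 \<Longrightarrow> sign_symbol x = s \<longleftrightarrow> x = (-1) ^ s"
  by (auto simp: sign_symbol_def less_2_cases_iff)

lemma sign_symbol_uminus:
  "x = 1 \<or> x = -1 \<Longrightarrow> sign_symbol (- x) = 1 - sign_symbol x"
  by (auto simp: sign_symbol_def)

text \<open>Rows 0, 1, 2, 3 of \<open>stack_rect p q v\<close> are \<open>v\<close>, \<open>v\<close>, \<open>-v\<close>, \<open>-v\<close>, read along the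
  enumerations \<open>p\<close>, \<open>q\<close>, \<open>p\<close>, \<open>q\<close> respectively.\<close>
definition stack_col :: "(nat \<Rightarrow> nat) \<Rightarrow> (nat \<Rightarrow> nat) \<Rightarrow> nat \<Rightarrow> nat \<Rightarrow> nat" where
  "stack_col p q i j = (if even i then p j else q j)"

definition stack_rect :: "(nat \<Rightarrow> nat) \<Rightarrow> (nat \<Rightarrow> nat) \<Rightarrow> (nat \<Rightarrow> int) \<Rightarrow> nat \<Rightarrow> nat \<Rightarrow> nat" where
  "stack_rect p q v i j = sign_symbol ((-1) ^ (i div 2) * v (stack_col p q i j))"

lemma stack_rect_eq_iff:
  assumes "v (stack_col p q i j) = 1 \<or> v (stack_col p q i j) = -1" and "s < 2"
  shows "stack_rect p q v i j = s \<longleftrightarrow> v (stack_col p q i j) = (-1) ^ (i div 2 + s)"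
proof -
  have "((-1::int) ^ m * x = (-1) ^ s) \<longleftrightarrow> (x = (-1) ^ (m + s))" for m and x :: int
    by (cases "even m") (auto simp: power_add)
  then show ?thesis
    using assms unfolding stack_rect_def
    by (subst sign_symbol_eq_iff) (auto simp: minus_one_power_iff)
qed

lemma card_preimage_bij_betw:
  assumes "bij_betw p {..<n} S"
  shows "card {j. j < n \<and> R (p j)} = card {k\<in>S. R k}"
proof -
  have "bij_betw p {j. j < n \<and> R (p j)} {k\<in>S. R k}"
    using assms unfolding bij_betw_def inj_on_def by auto
  then show ?thesis by (rule bij_betw_same_card)
qed

lemma card_complementary_pairs:
  assumes "\<And>i. i < 2 \<Longrightarrow> X (i + 2) \<longleftrightarrow> \<not> X i"
  shows "card {i. i < (4::nat) \<and> X i} = 2"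
proof -
  have "X 2 \<longleftrightarrow> \<not> X 0" "X 3 \<longleftrightarrow> \<not> X 1"
    using assms[of 0] assms[of 1] by (simp_all add: numeral_2_eq_2 numeral_3_eq_3)
  then have "{i. i < (4::nat) \<and> X i} = {if X 0 then 0 else 2, if X 1 then 1 else 3}"
    by (auto simp: eval_nat_numeral less_Suc_eq)
  then show ?thesis by simp
qed

lemma stack_col_mem:
  assumes "bij_betw p {..<n} P" and "bij_betw q {..<n} Q" and "j < n"
  shows "stack_col p q i j \<in> P \<union> Q"
  using assms unfolding bij_betw_def stack_col_def by auto

lemma card_stack_col_preimage:
  assumes "bij_betw p {..<n} P" and "bij_betw q {..<n} Q"
  shows "card {j. j < n \<and> R (stack_col p q i j)} = card {k \<in> (if even i then P else Q). R k}"
  using card_preimage_bij_betw[OF assms(1), of R] card_preimage_bij_betw[OF assms(2), of R]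
  by (simp add: stack_col_def)

lemma freq_rect_stack_rect:
  assumes p: "bij_betw p {..<n} P" and q: "bij_betw q {..<n} Q"
    and v_sign: "\<forall>k\<in>P \<union> Q. v k = 1 \<or> v k = -1"
    and balanced_P: "\<And>\<sigma>. \<sigma> = 1 \<or> \<sigma> = -1 \<Longrightarrow> 2 * card {k\<in>P. v k = \<sigma>} = n"
    and balanced_Q: "\<And>\<sigma>. \<sigma> = 1 \<or> \<sigma> = -1 \<Longrightarrow> 2 * card {k\<in>Q. v k = \<sigma>} = n"
  shows "freq_rect 4 n 2 (stack_rect p q v)"
proof -
  have entry_sign: "v (stack_col p q i j) = 1 \<or> v (stack_col p q i j) = -1" if "j < n" for i j
    using stack_col_mem[OF p q that] v_sign by blast
  have rows: "2 * card {j. j < n \<and> stack_rect p q v i j = s} = n" if "s < 2" for i s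
  proof -
    define \<sigma> :: int where "\<sigma> = (-1) ^ (i div 2 + s)"
    have "stack_rect p q v i j = s \<longleftrightarrow> v (stack_col p q i j) = \<sigma>" if "j < n" for j
      unfolding \<sigma>_def
      using stack_rect_eq_iff[of v p q i j s, OF entry_sign[OF that] \<open>s < 2\<close>] .
    then have "{j. j < n \<and> stack_rect p q v i j = s} = {j. j < n \<and> v (stack_col p q i j) = \<sigma>}"
      by blast
    then have "card {j. j < n \<and> stack_rect p q v i j = s} =
        card {k \<in> (if even i then P else Q). v k = \<sigma>}"
      using card_stack_col_preimage[OF p q, of "\<lambda>k. v k = \<sigma>" i] by simp
    moreover have "\<sigma> = 1 \<or> \<sigma> = -1"
      unfolding \<sigma>_def by (simp add: minus_one_power_iff)
    ultimately show ?thesis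
      using balanced_P balanced_Q by simp
  qed
  have cols: "2 * card {i. i < 4 \<and> stack_rect p q v i j = s} = 4" if "j < n" "s < 2" for j s
  proof -
    have "card {i. i < 4 \<and> stack_rect p q v i j = s} = 2"
    proof (rule card_complementary_pairs)
      fix i :: nat
      assume "i < 2"
      then have "stack_rect p q v (i + 2) j = 1 - stack_rect p q v i j"
        using sign_symbol_uminus entry_sign[OF \<open>j < n\<close>, of i]
        unfolding stack_rect_def stack_col_def by simp
      moreover have "stack_rect p q v i j \<le> 1"
        unfolding stack_rect_def sign_symbol_def by simp
      ultimately show "stack_rect p q v (i + 2) j = s \<longleftrightarrow> stack_rect p q v i j \<noteq> s"
        using \<open>s < 2\<close> by presburger
    qed
    then show ?thesis by simp
  qed
  have "stack_rect p q v i j < 2" for i j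
    unfolding stack_rect_def sign_symbol_def by simp
  with rows cols show ?thesis
    unfolding freq_rect_def by blast
qed

lemma orth_fr_stack_rect:
  assumes p: "bij_betw p {..<n} P" and q: "bij_betw q {..<n} Q" and "P \<inter> Q = {}"
    and v_sign: "\<forall>k\<in>P \<union> Q. v k = 1 \<or> v k = -1"
    and w_sign: "\<forall>k\<in>P \<union> Q. w k = 1 \<or> w k = -1"
    and balanced: "\<And>\<sigma> \<tau>. \<sigma> = 1 \<or> \<sigma> = -1 \<Longrightarrow> \<tau> = 1 \<or> \<tau> = -1 \<Longrightarrow>
      card {k\<in>P \<union> Q. v k = \<sigma> \<and> w k = \<tau>} = c"
  shows "orth_fr 4 n 2 (stack_rect p q v) (stack_rect p q w)"
proof -
  have finite_P_Q: "finite P" "finite Q"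
    using bij_betw_finite p q by blast+
  have split: "card {k\<in>P. R k} + card {k\<in>Q. R k} = card {k\<in>P \<union> Q. R k}" for R
  proof -
    have "{k\<in>P. R k} \<inter> {k\<in>Q. R k} = {}"
      using \<open>P \<inter> Q = {}\<close> by blast
    then have "card ({k\<in>P. R k} \<union> {k\<in>Q. R k}) = card {k\<in>P. R k} + card {k\<in>Q. R k}"
      using finite_P_Q by (simp add: card_Un_disjoint)
    moreover have "{k\<in>P \<union> Q. R k} = {k\<in>P. R k} \<union> {k\<in>Q. R k}"
      by blast
    ultimately show ?thesis by simp
  qed
  have "card {(i, j). i < 4 \<and> j < n \<and> stack_rect p q v i j = s \<and> stack_rect p q w i j = t} = 2 * c"
    if "s < 2" "t < 2" for s t
  proof -
    define \<sigma> :: "nat \<Rightarrow> int" where "\<sigma> i = (-1) ^ (i div 2 + s)" for i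
    define \<tau> :: "nat \<Rightarrow> int" where "\<tau> i = (-1) ^ (i div 2 + t)" for i
    let ?row = "\<lambda>i. {j. j < n \<and> stack_rect p q v i j = s \<and> stack_rect p q w i j = t}"
    have row: "card (?row i) = card {k \<in> (if even i then P else Q). v k = \<sigma> i \<and> w k = \<tau> i}" for i
    proof -
      have "stack_rect p q v i j = s \<and> stack_rect p q w i j = t \<longleftrightarrow>
          v (stack_col p q i j) = \<sigma> i \<and> w (stack_col p q i j) = \<tau> i" if "j < n" for j
        using stack_rect_eq_iff[of v p q i j s] stack_rect_eq_iff[of w p q i j t]
          stack_col_mem[OF p q that] v_sign w_sign \<open>s < 2\<close> \<open>t < 2\<close>
        unfolding \<sigma>_def \<tau>_def by blast
      then have "?row i = {j. j < n \<and> v (stack_col p q i j) = \<sigma> i \<and> w (stack_col p q i j) = \<tau> i}"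
        by blast
      then show ?thesis
        using card_stack_col_preimage[OF p q, of "\<lambda>k. v k = \<sigma> i \<and> w k = \<tau> i" i] by simp
    qed
    have sum_4: "(\<Sum>i<4. g i) = g 0 + g 1 + g 2 + g 3" for g :: "nat \<Rightarrow> nat"
      by (simp add: eval_nat_numeral)
    have "{(i, j). i < 4 \<and> j < n \<and> stack_rect p q v i j = s \<and> stack_rect p q w i j = t} =
        Sigma {..<4} ?row"
      by auto
    then have "card {(i, j). i < 4 \<and> j < n \<and> stack_rect p q v i j = s \<and> stack_rect p q w i j = t} =
        (\<Sum>i<4. card (?row i))"
      by simp
    also have "\<dots> = card {k\<in>P \<union> Q. v k = (-1) ^ s \<and> w k = (-1) ^ t} +
        card {k\<in>P \<union> Q. v k = - ((-1) ^ s) \<and> w k = - ((-1) ^ t)}"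
      unfolding sum_4 row split[symmetric] \<sigma>_def \<tau>_def by simp
    also have "\<dots> = 2 * c"
      using balanced by (simp add: minus_one_power_iff)
    finally show ?thesis .
  qed
  then show ?thesis
    unfolding orth_fr_def by blast
qed

lemma MOFR_stack_rect_normalized_hadamard:
  assumes H: "hadamard (4 * a) H" and first_row: "\<forall>j<4 * a. H 0 j = 1"
    and p: "bij_betw p {..<2 * a} {k\<in>{..<4 * a}. H 1 k = 1}"
    and q: "bij_betw q {..<2 * a} {k\<in>{..<4 * a}. H 1 k = -1}"
  shows "MOFR (4 * a - 2) 4 (2 * a) 2 (\<lambda>r. stack_rect p q (H (r + 2)))"
proof -
  let ?P = "{k\<in>{..<4 * a}. H 1 k = 1}" and ?Q = "{k\<in>{..<4 * a}. H 1 k = -1}"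
  have "H 1 k = 1 \<or> H 1 k = -1" if "k < 4 * a" for k
    using hadamard_entry[OF H _ that, of 1] that by presburger
  then have P_Q: "?P \<union> ?Q = {..<4 * a}" "?P \<inter> ?Q = {}"
    by auto
  have row_sign: "\<forall>k\<in>?P \<union> ?Q. H R k = 1 \<or> H R k = -1" if "R < 4 * a" for R
    using hadamard_entry[OF H that] P_Q(1) by blast
  have half_split: "2 * card {k\<in>?P. H R k = \<sigma>} = 2 * a" "2 * card {k\<in>?Q. H R k = \<sigma>} = 2 * a"
    if "2 \<le> R" "R < 4 * a" "\<sigma> = 1 \<or> \<sigma> = -1" for R \<sigma>
  proof -
    have "{k\<in>?P. H R k = \<sigma>} = {k\<in>{..<4 * a}. H R k = \<sigma> \<and> H 1 k = 1}"
      "{k\<in>?Q. H R k = \<sigma>} = {k\<in>{..<4 * a}. H R k = \<sigma> \<and> H 1 k = -1}"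
      by auto
    then show "2 * card {k\<in>?P. H R k = \<sigma>} = 2 * a" "2 * card {k\<in>?Q. H R k = \<sigma>} = 2 * a"
      using normalized_hadamard_card_rows[OF H first_row, of R 1 \<sigma>] that by auto
  qed
  have rows_balanced: "card {k\<in>?P \<union> ?Q. H R k = \<sigma> \<and> H R' k = \<tau>} = a"
    if "2 \<le> R" "R < 4 * a" "2 \<le> R'" "R' < 4 * a" "R \<noteq> R'" "\<sigma> = 1 \<or> \<sigma> = -1" "\<tau> = 1 \<or> \<tau> = -1"
    for R R' \<sigma> \<tau>
    using normalized_hadamard_card_rows[OF H first_row, of R R' \<sigma> \<tau>] that unfolding P_Q(1) by simp
  show ?thesis
    unfolding MOFR_def
  proof (intro conjI allI impI)
    fix r assume "r < 4 * a - 2"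
    then show "freq_rect 4 (2 * a) 2 (stack_rect p q (H (r + 2)))"
      using freq_rect_stack_rect[OF p q row_sign] half_split by simp
  next
    fix r r' assume "r < 4 * a - 2" "r' < 4 * a - 2" "r \<noteq> r'"
    then show "orth_fr 4 (2 * a) 2 (stack_rect p q (H (r + 2))) (stack_rect p q (H (r' + 2)))"
      using orth_fr_stack_rect[OF p q P_Q(2) row_sign row_sign] rows_balanced by simp
  qed
qed

theorem mainTheorem4:
  fixes a :: nat
  assumes "a > 0"
    and "\<exists>H. hadamard (4 * a) H"
  shows "\<exists>F. MOFR (4 * a - 2) 4 (2 * a) 2 F"
proof -
  obtain H0 where "hadamard (4 * a) H0"
    using assms(2) by blast
  define H where "H = normalize_columns H0"
  have H: "hadamard (4 * a) H" and first_row: "\<forall>j<4 * a. H 0 j = 1"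
    unfolding H_def
    using hadamard_normalize_columns normalize_columns_first_row \<open>hadamard (4 * a) H0\<close> by blast+
  have half: "card {..<2 * a} = card {k\<in>{..<4 * a}. H 1 k = \<sigma>}" if "\<sigma> = 1 \<or> \<sigma> = -1" for \<sigma>
    using normalized_hadamard_card_row[OF H first_row, of 1 \<sigma>] \<open>a > 0\<close> that by simp
  obtain p where "bij_betw p {..<2 * a} {k\<in>{..<4 * a}. H 1 k = 1}"
    using finite_same_card_bij[OF _ _ half[of 1]] by auto
  moreover obtain q where "bij_betw q {..<2 * a} {k\<in>{..<4 * a}. H 1 k = -1}"
    using finite_same_card_bij[OF _ _ half[of "-1"]] by auto
  ultimately show ?thesis
    using MOFR_stack_rect_normalized_hadamard[OF H first_row] by blast
qed

end
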